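(* Let $P$ be a program, $F$ a set of facts, and let $\mathcal{ES}$ be the set of all embedding programs for $P\cup F$. Then $AS(P\cup F)=AS\big(\bigcap_{E\in\mathcal{ES}}E\big)$.
   Context: A program is a finite set of rules of the form $\alpha_1 \mid \dots \mid \alpha_k \;\texttt{:-}\; \beta_1,\dots,\beta_n, \mathit{not}\ \beta_{n+1},\dots,\mathit{not}\ \beta_m$ ($k,n,m\ge 0$), with $H(r)=\{\alpha_1,\dots,\alpha_k\}$, $B^+(r)=\{\beta_1,\dots,\beta_n\}$, $B^-(r)=\{\mathit{not}\ \beta_{n+1},\dots,\mathit{not}\ \beta_m\}$, $B(r)=B^+(r)\cup B^-(r)$. Programs are safe and contain no facts; facts are given as a set $F$ of ground atoms, each regarded as a ground rule with a single head atom and empty body; constants come from a fixed finite Herbrand universe. $\mathrm{grnd}(P)$ is the set of all ground instances of rules of $P$. For a ground program $G$ and a set of ground atoms $A$, the FLP reduct is $G^A=\{r\in G : A\models B(r)\}$; $A$ is an answer set of $G$ if $A$ is a subset-minimal model of $G^A$. $AS(G)$ is the set of answer sets of $G$, and $AS(P\cup F)$ denotes $AS(\mathrm{grnd}(P)\cup F)$. Embeddings: for a set of ground rules $R\subseteq \mathrm{grnd}(P)\cup F$ and a rule $r\in \mathrm{grnd}(P)\cup F$: $R\vdash_b r$ iff for every $a\in B^+(r)$ there is $r'\in R$ with $a\in H(r')$; $R\vdash_h r$ iff $r\in R$; $R\vdash r$ iff either $R\nvdash_b r$ or $R\vdash_h r$. A set $E\subseteq \mathrm{grnd}(P)\cup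 F$ is an embedding program for $P\cup F$ if $E\vdash r$ for every $r\in \mathrm{grnd}(P)\cup F$. *)

theory Defs
  imports Main
begin

text \<open>Terms are variables or constants (no function symbols); constants range over
  a type 'c, which in the theorem is required to be finite (the fixed finite Herbrand
  universe).\<close>

datatype ('v, 'c) trm = Var 'v | Const 'c

type_synonym ('p, 'v, 'c) atom = "'p \<times> ('v, 'c) trm list"
type_synonym ('p, 'c) gatom = "'p \<times> 'c list"

text \<open>A rule  a1 | ... | ak :- b1,...,bn, not b(n+1), ..., not bm.\<close>
datatype 'a rule = Rule (head: "'a list") (pos: "'a list") (neg: "'a list")

definition H :: "'a rule \<Rightarrow> 'a set" where "H r = set (head r)"
definition Bpos :: "'a rule \<Rightarrow> 'a set" where "Bpos r = set (pos r)"
definition Bneg :: "'a rule \<Rightarrow> 'a set" where "Bneg r = set (neg r)"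

fun tvars :: "('v, 'c) trm \<Rightarrow> 'v set" where
  "tvars (Var v) = {v}"
| "tvars (Const c) = {}"

definition avars :: "('p, 'v, 'c) atom \<Rightarrow> 'v set" where
  "avars a = (\<Union>t\<in>set (snd a). tvars t)"

definition atoms_vars :: "('p, 'v, 'c) atom set \<Rightarrow> 'v set" where
  "atoms_vars A = (\<Union>a\<in>A. avars a)"

definition safe_rule :: "('p, 'v, 'c) atom rule \<Rightarrow> bool" where
  "safe_rule r \<longleftrightarrow> atoms_vars (H r) \<union> atoms_vars (Bneg r) \<subseteq> atoms_vars (Bpos r)"

definition is_fact :: "'a rule \<Rightarrow> bool" where
  "is_fact r \<longleftrightarrow> card (H r) = 1 \<and> Bpos r = {} \<and> Bneg r = {}"

definition program :: "('p, 'v, 'c) atom rule set \<Rightarrow> bool" where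
  "program P \<longleftrightarrow> finite P \<and> (\<forall>r\<in>P. safe_rule r \<and> \<not> is_fact r)"

fun inst_trm :: "('v \<Rightarrow> 'c) \<Rightarrow> ('v, 'c) trm \<Rightarrow> 'c" where
  "inst_trm \<sigma> (Var v) = \<sigma> v"
| "inst_trm \<sigma> (Const c) = c"

definition inst_atom :: "('v \<Rightarrow> 'c) \<Rightarrow> ('p, 'v, 'c) atom \<Rightarrow> ('p, 'c) gatom" where
  "inst_atom \<sigma> a = (fst a, map (inst_trm \<sigma>) (snd a))"

definition inst_rule :: "('v \<Rightarrow> 'c) \<Rightarrow> ('p, 'v, 'c) atom rule \<Rightarrow> ('p, 'c) gatom rule" where
  "inst_rule \<sigma> r = map_rule (inst_atom \<sigma>) r"

definition grnd :: "('p, 'v, 'c) atom rule set \<Rightarrow> ('p, 'c) gatom rule set" where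
  "grnd P = {inst_rule \<sigma> r | \<sigma> r. r \<in> P}"

definition fact_rule :: "'a \<Rightarrow> 'a rule" where
  "fact_rule a = Rule [a] [] []"

definition facts :: "'a set \<Rightarrow> 'a rule set" where
  "facts F = fact_rule ` F"

definition sat_body :: "'a set \<Rightarrow> 'a rule \<Rightarrow> bool" where
  "sat_body A r \<longleftrightarrow> Bpos r \<subseteq> A \<and> Bneg r \<inter> A = {}"

definition sat_rule :: "'a set \<Rightarrow> 'a rule \<Rightarrow> bool" where
  "sat_rule A r \<longleftrightarrow> (sat_body A r \<longrightarrow> H r \<inter> A \<noteq> {})"

definition is_model :: "'a set \<Rightarrow> 'a rule set \<Rightarrow> bool" where
  "is_model A G \<longleftrightarrow> (\<forall>r\<in>G. sat_rule A r)"

definition flp_reduct :: "'a rule set \<Rightarrow> 'a set \<Rightarrow> 'a rule set" where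
  "flp_reduct G A = {r \<in> G. sat_body A r}"

definition answer_set :: "'a rule set \<Rightarrow> 'a set \<Rightarrow> bool" where
  "answer_set G A \<longleftrightarrow> is_model A (flp_reduct G A) \<and>
     (\<forall>A'. A' \<subset> A \<longrightarrow> \<not> is_model A' (flp_reduct G A))"

definition AS :: "'a rule set \<Rightarrow> 'a set set" where
  "AS G = {A. answer_set G A}"

definition ent_b :: "'a rule set \<Rightarrow> 'a rule \<Rightarrow> bool" where
  "ent_b R r \<longleftrightarrow> (\<forall>a\<in>Bpos r. \<exists>r'\<in>R. a \<in> H r')"

definition ent_h :: "'a rule set \<Rightarrow> 'a rule \<Rightarrow> bool" where
  "ent_h R r \<longleftrightarrow> r \<in> R"

definition ent :: "'a rule set \<Rightarrow> 'a rule \<Rightarrow> bool" where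
  "ent R r \<longleftrightarrow> \<not> ent_b R r \<or> ent_h R r"

definition embedding_program ::
  "('p, 'v, 'c) atom rule set \<Rightarrow> ('p, 'c) gatom set \<Rightarrow> ('p, 'c) gatom rule set \<Rightarrow> bool" where
  "embedding_program P F E \<longleftrightarrow> E \<subseteq> grnd P \<union> facts F \<and>
     (\<forall>r\<in>grnd P \<union> facts F. ent E r)"

end

theory Submission
  imports Defs
begin

text \<open>Let \<open>I\<close> be the intersection of all embedding programs. Every rule whose positive body
  is covered by heads of \<open>I\<close> lies in every embedding program, hence in \<open>I\<close>; so the atoms
  derivable from heads of \<open>I\<close> are again heads of \<open>I\<close>. By minimality, an answer set of the
  full ground program or of \<open>I\<close> cannot contain atoms outside this closed set, and on
  interpretations inside it both programs have the same FLP reduct.\<close>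

lemma answer_set_subset_closed:
  assumes closed: "\<And>r. r \<in> G \<Longrightarrow> Bpos r \<subseteq> S \<Longrightarrow> H r \<subseteq> S"
    and as: "answer_set G A"
  shows "A \<subseteq> S"
proof (rule ccontr)
  assume "\<not> A \<subseteq> S"
  then have smaller: "A \<inter> S \<subset> A" by blast
  have "is_model (A \<inter> S) (flp_reduct G A)"
    unfolding is_model_def
  proof
    fix r assume r: "r \<in> flp_reduct G A"
    then have "r \<in> G" and body: "sat_body A r"
      unfolding flp_reduct_def by auto
    moreover have "sat_rule A r"
      using r as unfolding answer_set_def is_model_def by blast
    ultimately show "sat_rule (A \<inter> S) r"
      using closed[of r] unfolding sat_rule_def sat_body_def by blast
  qed
  with smaller as show False
    unfolding answer_set_def by blast
qed

lemma flp_reduct_eq_closed_subprogram: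
  assumes "I \<subseteq> G"
    and "\<And>r. r \<in> G \<Longrightarrow> Bpos r \<subseteq> (\<Union>r'\<in>I. H r') \<Longrightarrow> r \<in> I"
    and "A \<subseteq> (\<Union>r'\<in>I. H r')"
  shows "flp_reduct G A = flp_reduct I A"
  using assms unfolding flp_reduct_def sat_body_def by blast

lemma AS_closed_subprogram:
  assumes sub: "I \<subseteq> G"
    and closed: "\<And>r. r \<in> G \<Longrightarrow> Bpos r \<subseteq> (\<Union>r'\<in>I. H r') \<Longrightarrow> r \<in> I"
  shows "AS G = AS I"
proof -
  let ?S = "\<Union>r'\<in>I. H r'"
  have closed_G: "H r \<subseteq> ?S" if "r \<in> G" "Bpos r \<subseteq> ?S" for r
    using closed[OF that] by blast
  then have closed_I: "H r \<subseteq> ?S" if "r \<in> I" "Bpos r \<subseteq> ?S" for r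
    using that sub by blast
  have "answer_set G A \<longleftrightarrow> answer_set I A" for A
  proof
    assume "answer_set G A"
    moreover from this have "A \<subseteq> ?S"
      using answer_set_subset_closed closed_G by blast
    ultimately show "answer_set I A"
      using flp_reduct_eq_closed_subprogram[OF sub closed] unfolding answer_set_def by simp
  next
    assume "answer_set I A"
    moreover from this have "A \<subseteq> ?S"
      using answer_set_subset_closed closed_I by blast
    ultimately show "answer_set G A"
      using flp_reduct_eq_closed_subprogram[OF sub closed] unfolding answer_set_def by simp
  qed
  then show ?thesis
    unfolding AS_def by blast
qed

lemma embedding_program_ground_program: "embedding_program P F (grnd P \<union> facts F)"
  unfolding embedding_program_def ent_def ent_h_def by blast

lemma Inter_embedding_programs_closed:
  assumes "r \<in> grnd P \<union> facts F"
    and "Bpos r \<subseteq> (\<Union>r'\<in>\<Inter> {E. embedding_program P F E}. H r')"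
  shows "r \<in> \<Inter> {E. embedding_program P F E}"
proof
  fix E assume "E \<in> {E. embedding_program P F E}"
  then have E: "embedding_program P F E" by simp
  with assms(2) have "ent_b E r"
    unfolding ent_b_def by blast
  with E assms(1) show "r \<in> E"
    unfolding embedding_program_def ent_def ent_h_def by blast
qed

theorem mainTheorem6:
  fixes P :: "('p, 'v, 'c::finite) atom rule set"
    and F :: "('p, 'c) gatom set"
  assumes "program P"
  shows "AS (grnd P \<union> facts F) = AS (\<Inter> {E. embedding_program P F E})"
proof (rule AS_closed_subprogram)
  show "\<Inter> {E. embedding_program P F E} \<subseteq> grnd P \<union> facts F"
    using embedding_program_ground_program by blast
qed (fact Inter_embedding_programs_closed)

end
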